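(* Let $S\subset\mathbb{R}^d$ be a nonempty compact convex set with diameter $D:=\sup_{x,y\in S}\|x-y\|$, and let $f$ be differentiable on $S$ with $L$-Lipschitz gradient on $S$ (not necessarily convex). Let $G:=\sup_{x\in S}\|\nabla f(x)\|<\infty$, fix $C\ge\max\{LD^2,\,GD\}$ with $C>0$, and let $f^*:=\inf_{x\in S}f(x)$. Let $\delta\ge0$ and suppose that for every $x\in S$ a vector $g_\delta(x)\in\mathbb{R}^d$ is available with \[ \big|\langle \nabla f(x)-g_\delta(x),\,s-x\rangle\big|\le\delta\quad\text{for all } s\in S. \] Given $x^0\in S$, define iterates for $k=0,1,2,\dots$ by choosing $s^k\in\arg\min_{s\in S}\langle g_\delta(x^k),\,s-x^k\rangle$, setting $\tilde g_k:=\langle g_\delta(x^k),\,x^k-s^k\rangle$, $\overline\alpha_k:=(\tilde g_k-\delta)_+/C$ where $(u)_+:=\max\{u,0\}$, and $x^{k+1}:=x^k+\overline\alpha_k(s^k-x^k)$. Let $\mathcal{G}(x):=\max_{s\in S}\langle\nabla f(x),\,x-s\rangle$ denote the Frank–Wolfe gap. Then for every $K\ge0$, \[ \min_{0\le k\le K}\mathcal{G}(x^k)\le\sqrt{\frac{2C\,(f(x^0)-f^* )}{K+1}}+2\delta . \] In particular, for any $\varepsilon>2\delta$, $\min_{0\le k\le K}\mathcal{G}(x^k)\le\varepsilon$ holds whenever \[ K+1\ge\frac{2C\,(f(x^0)-f^* )}{(\varepsilon-2\delta)^2}. \]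
   Context: $\|\cdot\|$ is the Euclidean norm and $\langle\cdot,\cdot\rangle$ the Euclidean inner product. (In the paper the Frank–Wolfe gap is denoted $G(x)$; here it is written $\mathcal{G}(x)$ to distinguish it from the gradient bound $G$.) *)

theory Defs
  imports "HOL-Analysis.Analysis"
begin

text \<open>Frank--Wolfe gap of f at x over S, given the gradient field grad:
  max over s in S of the inner product of grad x with (x - s).
  (The max is attained since S is compact; we write it as a supremum.)\<close>
definition fw_gap :: "'a::euclidean_space set \<Rightarrow> ('a \<Rightarrow> 'a) \<Rightarrow> 'a \<Rightarrow> real" where
  "fw_gap S grad x = (SUP s\<in>S. grad x \<bullet> (x - s))"

definition pos_part :: "real \<Rightarrow> real" where
  "pos_part u = max u 0"

end

theory Submission
  imports Defs
begin

text \<open>The quadratic upper bound for a function with L-Lipschitz gradient, applied along the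
  segment from \<open>x\<^sup>k\<close> towards \<open>s\<^sup>k\<close>, shows that the short step \<open>(g\<^sub>k - \<delta>)\<^sub>+ / C\<close> decreases f by
  at least \<open>((g\<^sub>k - \<delta>)\<^sub>+)\<^sup>2 / (2C)\<close>: the inexact model gap \<open>g\<^sub>k\<close> underestimates the true slope by at
  most \<open>\<delta>\<close>, \<open>C \<ge> G D\<close> keeps the step size at most 1, and \<open>C \<ge> L D\<^sup>2\<close> bounds the curvature term.
  Telescoping bounds the sum of these squares by \<open>2C (f(x\<^sup>0) - f\<^sup>*)\<close>. Since the Frank--Wolfe gap
  exceeds the model gap by at most \<open>\<delta>\<close>, the smallest gap exceeds \<open>2\<delta>\<close> by at most the root mean
  square of the \<open>(g\<^sub>k - \<delta>)\<^sub>+\<close>.\<close>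

lemma lipschitz_gradient_segment_upper_bound:
  fixes S :: "'a::euclidean_space set" and f :: "'a \<Rightarrow> real" and grad :: "'a \<Rightarrow> 'a"
  assumes S_convex: "convex S"
    and f_grad: "\<And>y. y \<in> S \<Longrightarrow> (f has_derivative (\<lambda>h. grad y \<bullet> h)) (at y within S)"
    and grad_lip: "\<And>y z. y \<in> S \<Longrightarrow> z \<in> S \<Longrightarrow> norm (grad y - grad z) \<le> L * norm (y - z)"
    and xS: "x \<in> S" and sS: "s \<in> S" and a0: "0 \<le> a" and a1: "a \<le> 1"
  shows "f (x + a *\<^sub>R (s - x))
      \<le> f x + a * (grad x \<bullet> (s - x)) + L * a\<^sup>2 * (norm (s - x))\<^sup>2 / 2"
proof (cases "a = 0")
  case True
  then show ?thesis by simp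
next
  case False
  with a0 have a_pos: "0 < a" by simp
  define h where "h = s - x"
  have segment_in_S: "x + t *\<^sub>R h \<in> S" if "0 \<le> t" "t \<le> 1" for t
  proof -
    have "x + t *\<^sub>R h = (1 - t) *\<^sub>R x + t *\<^sub>R s" by (simp add: h_def algebra_simps)
    then show ?thesis using convexD[OF S_convex xS sS, of "1 - t" t] that by simp
  qed
  define \<psi> where "\<psi> t = f (x + t *\<^sub>R h) - t * (grad x \<bullet> h) - L * t\<^sup>2 * (norm h)\<^sup>2 / 2" for t
  define \<psi>' where "\<psi>' t = (\<lambda>d. grad (x + t *\<^sub>R h) \<bullet> (d *\<^sub>R h) - d * (grad x \<bullet> h)
      - L * (2 * t * d) * (norm h)\<^sup>2 / 2)" for t
  have \<psi>_deriv: "(\<psi> has_derivative \<psi>' t) (at t within {0..a})" if "0 \<le> t" "t \<le> a" for t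
  proof -
    have line: "((\<lambda>t. x + t *\<^sub>R h) has_derivative (\<lambda>d. d *\<^sub>R h)) (at t within {0..a})"
      by (auto intro!: derivative_eq_intros)
    have image: "(\<lambda>t. x + t *\<^sub>R h) ` {0..a} \<subseteq> S" using segment_in_S a1 by auto
    have f_on_segment: "((\<lambda>t. f (x + t *\<^sub>R h)) has_derivative
        (\<lambda>d. grad (x + t *\<^sub>R h) \<bullet> (d *\<^sub>R h))) (at t within {0..a})"
      using has_derivative_in_compose2[OF f_grad image _ line] that by simp
    show ?thesis unfolding \<psi>_def \<psi>'_def
      by (rule derivative_eq_intros f_on_segment refl | simp)+ (auto simp: algebra_simps)
  qed
  obtain \<xi> where \<xi>: "\<xi> \<in> {0<..<a}" and mvt: "\<psi> a - \<psi> 0 = \<psi>' \<xi> (a - 0)"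
    using mvt_simple[OF a_pos \<psi>_deriv] by auto
  have \<xi>_in_S: "x + \<xi> *\<^sub>R h \<in> S" using segment_in_S \<xi> a1 by auto
  have "\<psi>' \<xi> (a - 0) = a * ((grad (x + \<xi> *\<^sub>R h) - grad x) \<bullet> h - L * \<xi> * (norm h)\<^sup>2)"
    by (simp add: \<psi>'_def algebra_simps inner_diff_left)
  also have "\<dots> \<le> 0"
  proof -
    have "(grad (x + \<xi> *\<^sub>R h) - grad x) \<bullet> h \<le> norm (grad (x + \<xi> *\<^sub>R h) - grad x) * norm h"
      by (rule norm_cauchy_schwarz)
    also have "\<dots> \<le> L * norm (\<xi> *\<^sub>R h) * norm h"
      using grad_lip[OF \<xi>_in_S xS] by (simp add: mult_right_mono)
    also have "\<dots> = L * \<xi> * (norm h)\<^sup>2" using \<xi> by (simp add: power2_eq_square)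
    finally show ?thesis using a_pos by (intro mult_nonneg_nonpos) auto
  qed
  finally have "\<psi> a \<le> \<psi> 0" using mvt by simp
  then show ?thesis by (simp add: \<psi>_def h_def)
qed

lemma pos_part_mult_self: "pos_part u * u = (pos_part u)\<^sup>2"
  by (simp add: pos_part_def power2_eq_square max_def)

lemma short_step_decrease:
  fixes S :: "'a::euclidean_space set" and f :: "'a \<Rightarrow> real" and grad :: "'a \<Rightarrow> 'a"
  assumes S_convex: "convex S"
    and f_grad: "\<And>y. y \<in> S \<Longrightarrow> (f has_derivative (\<lambda>h. grad y \<bullet> h)) (at y within S)"
    and grad_lip: "\<And>y z. y \<in> S \<Longrightarrow> z \<in> S \<Longrightarrow> norm (grad y - grad z) \<le> L * norm (y - z)"
    and xS: "x \<in> S" and sS: "s \<in> S"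
    and slope: "u \<le> grad x \<bullet> (x - s)" and u_le: "u \<le> C"
    and curvature: "L * (norm (s - x))\<^sup>2 \<le> C" and C_pos: "0 < C"
  shows "f (x + (pos_part u / C) *\<^sub>R (s - x)) \<le> f x - (pos_part u)\<^sup>2 / (2 * C)"
proof -
  define a where "a = pos_part u / C"
  have a0: "0 \<le> a" and a1: "a \<le> 1"
    using u_le C_pos by (auto simp: a_def pos_part_def)
  have "f (x + a *\<^sub>R (s - x)) \<le> f x + a * (grad x \<bullet> (s - x)) + L * a\<^sup>2 * (norm (s - x))\<^sup>2 / 2"
    by (rule lipschitz_gradient_segment_upper_bound[OF S_convex f_grad grad_lip xS sS a0 a1])
  also have "\<dots> \<le> f x - a * u + a\<^sup>2 * C / 2"
  proof -
    have "grad x \<bullet> (s - x) \<le> - u" using slope by (simp add: inner_diff_right)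
    then have "a * (grad x \<bullet> (s - x)) \<le> a * (- u)" using a0 by (rule mult_left_mono)
    moreover have "a\<^sup>2 * (L * (norm (s - x))\<^sup>2) \<le> a\<^sup>2 * C"
      using curvature by (rule mult_left_mono) simp
    moreover have "L * a\<^sup>2 * (norm (s - x))\<^sup>2 = a\<^sup>2 * (L * (norm (s - x))\<^sup>2)" by simp
    ultimately show ?thesis by linarith
  qed
  also have "\<dots> = f x - (pos_part u)\<^sup>2 / (2 * C)"
  proof -
    have "a * u = (pos_part u)\<^sup>2 / C" by (simp add: a_def pos_part_mult_self)
    moreover have "a\<^sup>2 * C / 2 = (pos_part u)\<^sup>2 / (2 * C)"
      using C_pos by (simp add: a_def power2_eq_square)
    ultimately show ?thesis by simp
  qed
  finally show ?thesis by (simp add: a_def)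
qed

lemma fw_gap_le_inexact_gap:
  fixes S :: "'a::euclidean_space set" and grad :: "'a \<Rightarrow> 'a"
  assumes S_ne: "S \<noteq> {}"
    and inexact: "\<And>t. t \<in> S \<Longrightarrow> \<bar>(grad x - g) \<bullet> (t - x)\<bar> \<le> \<delta>"
    and s_min: "\<And>t. t \<in> S \<Longrightarrow> g \<bullet> (s - x) \<le> g \<bullet> (t - x)"
  shows "fw_gap S grad x \<le> g \<bullet> (x - s) + \<delta>"
  unfolding fw_gap_def
proof (rule cSUP_least[OF S_ne])
  fix t assume t: "t \<in> S"
  have "grad x \<bullet> (x - t) = g \<bullet> (x - t) - (grad x - g) \<bullet> (t - x)"
    by (simp add: inner_diff_left inner_diff_right)
  moreover have "g \<bullet> (x - t) \<le> g \<bullet> (x - s)"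
    using s_min[OF t] by (simp add: inner_diff_right)
  ultimately show "grad x \<bullet> (x - t) \<le> g \<bullet> (x - s) + \<delta>"
    using inexact[OF t] by linarith
qed

lemma Min_le_sqrt_mean_square_pos_part:
  fixes a :: "nat \<Rightarrow> real"
  assumes sum_le: "(\<Sum>k\<le>K. (pos_part (a k - c))\<^sup>2) \<le> B"
  shows "(MIN k\<in>{0..K}. a k) \<le> sqrt (B / (real K + 1)) + c"
proof -
  define m where "m = (MIN k\<in>{0..K}. a k)"
  have "0 \<le> (\<Sum>k\<le>K. (pos_part (a k - c))\<^sup>2)" by (intro sum_nonneg) simp
  with sum_le have B_nonneg: "0 \<le> B" by linarith
  show ?thesis
  proof (cases "m \<le> c")
    case True
    then show ?thesis using B_nonneg by (simp add: m_def[symmetric] add_increasing)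
  next
    case False
    have "(m - c)\<^sup>2 \<le> (pos_part (a k - c))\<^sup>2" if "k \<le> K" for k
    proof -
      have "m \<le> a k" using that by (simp add: m_def)
      with False show ?thesis by (intro power_mono) (auto simp: pos_part_def)
    qed
    then have "(\<Sum>k\<le>K. (m - c)\<^sup>2) \<le> (\<Sum>k\<le>K. (pos_part (a k - c))\<^sup>2)"
      by (intro sum_mono) simp
    then have "(real K + 1) * (m - c)\<^sup>2 \<le> (\<Sum>k\<le>K. (pos_part (a k - c))\<^sup>2)"
      by (simp add: add.commute)
    with sum_le have "(m - c)\<^sup>2 \<le> B / (real K + 1)"
      by (simp add: field_simps)
    then have "m - c \<le> sqrt (B / (real K + 1))"
      using False real_le_rsqrt by simp
    then show ?thesis by (simp add: m_def)
  qed
qed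

lemma sqrt_divide_le_if_divide_square_le:
  fixes B e n :: real
  assumes e_pos: "0 < e" and "0 < n" and "B / e\<^sup>2 \<le> n"
  shows "sqrt (B / n) \<le> e"
proof -
  have "B / n \<le> e\<^sup>2" using assms by (simp add: divide_le_eq pos_divide_le_eq mult.commute)
  with e_pos show ?thesis by (simp add: real_le_lsqrt)
qed

locale inexact_frank_wolfe =
  fixes S :: "'a::euclidean_space set"
    and f :: "'a \<Rightarrow> real" and grad :: "'a \<Rightarrow> 'a"
    and gd :: "'a \<Rightarrow> 'a"
    and L C \<delta> :: real
    and x s :: "nat \<Rightarrow> 'a"
  assumes S_compact: "compact S" and S_convex: "convex S"
    and f_grad: "\<And>y. y \<in> S \<Longrightarrow> (f has_derivative (\<lambda>h. grad y \<bullet> h)) (at y within S)"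
    and grad_lip: "\<And>y z. y \<in> S \<Longrightarrow> z \<in> S \<Longrightarrow> norm (grad y - grad z) \<le> L * norm (y - z)"
    and G_fin: "bounded ((\<lambda>y. norm (grad y)) ` S)"
    and C_ge: "C \<ge> max (L * (diameter S)\<^sup>2) ((SUP y\<in>S. norm (grad y)) * diameter S)"
    and C_pos: "C > 0"
    and inexact_grad: "\<And>y t. y \<in> S \<Longrightarrow> t \<in> S \<Longrightarrow> \<bar>(grad y - gd y) \<bullet> (t - y)\<bar> \<le> \<delta>"
    and x0: "x 0 \<in> S"
    and s_in: "\<And>k. s k \<in> S"
    and s_min: "\<And>k t. t \<in> S \<Longrightarrow> gd (x k) \<bullet> (s k - x k) \<le> gd (x k) \<bullet> (t - x k)"
    and x_step: "\<And>k. x (Suc k) = x k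
        + (pos_part (gd (x k) \<bullet> (x k - s k) - \<delta>) / C) *\<^sub>R (s k - x k)"
begin

definition model_gap :: "nat \<Rightarrow> real" where
  "model_gap k = gd (x k) \<bullet> (x k - s k)"

lemma iterate_step: "x (Suc k) = x k + (pos_part (model_gap k - \<delta>) / C) *\<^sub>R (s k - x k)"
  by (simp add: x_step model_gap_def)

lemma norm_grad_le_Sup: "y \<in> S \<Longrightarrow> norm (grad y) \<le> (SUP y\<in>S. norm (grad y))"
  using bounded_imp_bdd_above[OF G_fin] by (intro cSUP_upper) auto

lemma norm_diff_le_diameter: "y \<in> S \<Longrightarrow> z \<in> S \<Longrightarrow> norm (y - z) \<le> diameter S"
  using diameter_bounded_bound[OF compact_imp_bounded[OF S_compact]] by (simp add: dist_norm)

lemma curvature_le_C: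
  assumes "y \<in> S" "z \<in> S"
  shows "L * (norm (y - z))\<^sup>2 \<le> C"
proof (cases "L \<ge> 0")
  case True
  have "(norm (y - z))\<^sup>2 \<le> (diameter S)\<^sup>2"
    using norm_diff_le_diameter[OF assms] by (simp add: power_mono)
  then have "L * (norm (y - z))\<^sup>2 \<le> L * (diameter S)\<^sup>2" using True by (rule mult_left_mono)
  then show ?thesis using C_ge by simp
next
  case False
  then have "L * (norm (y - z))\<^sup>2 \<le> 0" by (simp add: mult_nonpos_nonneg)
  then show ?thesis using C_pos by simp
qed

lemma inexact_slope_le:
  assumes "y \<in> S" "t \<in> S"
  shows "gd y \<bullet> (y - t) - \<delta> \<le> grad y \<bullet> (y - t)"
proof -
  have "grad y \<bullet> (y - t) = gd y \<bullet> (y - t) - (grad y - gd y) \<bullet> (t - y)"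
    by (simp add: inner_diff_left inner_diff_right)
  then show ?thesis using inexact_grad[OF assms] by linarith
qed

lemma inexact_slope_minus_delta_le_C:
  assumes y: "y \<in> S" and t: "t \<in> S"
  shows "gd y \<bullet> (y - t) - \<delta> \<le> C"
proof -
  have "gd y \<bullet> (y - t) - \<delta> \<le> grad y \<bullet> (y - t)" using inexact_slope_le[OF y t] .
  also have "\<dots> \<le> norm (grad y) * norm (y - t)" by (rule norm_cauchy_schwarz)
  also have "\<dots> \<le> (SUP y\<in>S. norm (grad y)) * diameter S"
    using norm_grad_le_Sup[OF y] norm_diff_le_diameter[OF y t]
    by (intro mult_mono) (auto intro: order_trans[OF norm_ge_zero])
  also have "\<dots> \<le> C" using C_ge by simp
  finally show ?thesis .
qed

lemma iterate_in_S: "x k \<in> S"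
proof (induction k)
  case 0
  show ?case by (rule x0)
next
  case (Suc k)
  define a where "a = pos_part (model_gap k - \<delta>) / C"
  have "0 \<le> a" "a \<le> 1"
    using inexact_slope_minus_delta_le_C[OF Suc s_in] C_pos
    by (auto simp: a_def model_gap_def pos_part_def)
  moreover have "x (Suc k) = (1 - a) *\<^sub>R x k + a *\<^sub>R s k"
    by (simp add: iterate_step a_def algebra_simps)
  ultimately show ?case using convexD[OF S_convex Suc s_in, of "1 - a" a] by simp
qed

lemma iterate_decrease: "f (x (Suc k)) \<le> f (x k) - (pos_part (model_gap k - \<delta>))\<^sup>2 / (2 * C)"
  unfolding iterate_step model_gap_def
  by (rule short_step_decrease[OF S_convex f_grad grad_lip iterate_in_S s_in
        inexact_slope_le[OF iterate_in_S s_in] inexact_slope_minus_delta_le_C[OF iterate_in_S s_in]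
        curvature_le_C[OF s_in iterate_in_S] C_pos])

lemma Inf_le_value:
  assumes "y \<in> S"
  shows "(INF y\<in>S. f y) \<le> f y"
proof -
  have "compact (f ` S)"
    using compact_continuous_image[OF has_derivative_continuous_on[OF f_grad] S_compact] .
  then have "bdd_below (f ` S)" by (intro bounded_imp_bdd_below compact_imp_bounded)
  then show ?thesis using assms by (rule cINF_lower)
qed

lemma sum_decrease_squares_le:
  "(\<Sum>k\<le>K. (pos_part (model_gap k - \<delta>))\<^sup>2) \<le> 2 * C * (f (x 0) - (INF y\<in>S. f y))"
proof -
  have "(\<Sum>k\<le>K. (pos_part (model_gap k - \<delta>))\<^sup>2) \<le> (\<Sum>k<Suc K. 2 * C * (f (x k) - f (x (Suc k))))"
    unfolding lessThan_Suc_atMost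
    using iterate_decrease C_pos by (intro sum_mono) (simp add: field_simps)
  also have "\<dots> = 2 * C * (f (x 0) - f (x (Suc K)))"
    unfolding sum_distrib_left[symmetric] sum_lessThan_telescope'[of "\<lambda>k. f (x k)"] ..
  also have "\<dots> \<le> 2 * C * (f (x 0) - (INF y\<in>S. f y))"
    using Inf_le_value[OF iterate_in_S] C_pos by simp
  finally show ?thesis .
qed

lemma fw_gap_iterate_le: "fw_gap S grad (x k) \<le> model_gap k + \<delta>"
  unfolding model_gap_def
proof (rule fw_gap_le_inexact_gap)
  show "S \<noteq> {}" using x0 by blast
qed (use inexact_grad[OF iterate_in_S] s_min in auto)

theorem Min_fw_gap_le:
  "(MIN k\<in>{0..K}. fw_gap S grad (x k))
    \<le> sqrt (2 * C * (f (x 0) - (INF y\<in>S. f y)) / (real K + 1)) + 2 * \<delta>"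
proof (rule Min_le_sqrt_mean_square_pos_part)
  have "(pos_part (fw_gap S grad (x k) - 2 * \<delta>))\<^sup>2 \<le> (pos_part (model_gap k - \<delta>))\<^sup>2" for k
    using fw_gap_iterate_le[of k] by (intro power_mono) (auto simp: pos_part_def)
  then have "(\<Sum>k\<le>K. (pos_part (fw_gap S grad (x k) - 2 * \<delta>))\<^sup>2)
      \<le> (\<Sum>k\<le>K. (pos_part (model_gap k - \<delta>))\<^sup>2)"
    by (rule sum_mono)
  also have "\<dots> \<le> 2 * C * (f (x 0) - (INF y\<in>S. f y))" by (rule sum_decrease_squares_le)
  finally show "(\<Sum>k\<le>K. (pos_part (fw_gap S grad (x k) - 2 * \<delta>))\<^sup>2)
      \<le> 2 * C * (f (x 0) - (INF y\<in>S. f y))" .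
qed

end

theorem theorem2:
  fixes S :: "'a::euclidean_space set"
    and f :: "'a \<Rightarrow> real" and grad :: "'a \<Rightarrow> 'a"
    and gd :: "'a \<Rightarrow> 'a"
    and L C \<delta> :: real
    and x s :: "nat \<Rightarrow> 'a"
  assumes S_ne: "S \<noteq> {}" and S_compact: "compact S" and S_convex: "convex S"
    and f_grad: "\<And>y. y \<in> S \<Longrightarrow> (f has_derivative (\<lambda>h. grad y \<bullet> h)) (at y within S)"
    and grad_lip: "\<And>y z. y \<in> S \<Longrightarrow> z \<in> S \<Longrightarrow> norm (grad y - grad z) \<le> L * norm (y - z)"
    and G_fin: "bounded ((\<lambda>y. norm (grad y)) ` S)"
    and C_ge: "C \<ge> max (L * (diameter S)\<^sup>2) ((SUP y\<in>S. norm (grad y)) * diameter S)"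
    and C_pos: "C > 0"
    and delta_nn: "\<delta> \<ge> 0"
    and inexact_grad: "\<And>y t. y \<in> S \<Longrightarrow> t \<in> S \<Longrightarrow> \<bar>(grad y - gd y) \<bullet> (t - y)\<bar> \<le> \<delta>"
    and x0: "x 0 \<in> S"
    and s_in: "\<And>k. s k \<in> S"
    and s_min: "\<And>k t. t \<in> S \<Longrightarrow> gd (x k) \<bullet> (s k - x k) \<le> gd (x k) \<bullet> (t - x k)"
    and x_step: "\<And>k. x (Suc k) = x k
        + (pos_part (gd (x k) \<bullet> (x k - s k) - \<delta>) / C) *\<^sub>R (s k - x k)"
  shows "\<forall>K::nat.
      (MIN k\<in>{0..K}. fw_gap S grad (x k))
        \<le> sqrt (2 * C * (f (x 0) - (INF y\<in>S. f y)) / (real K + 1)) + 2 * \<delta>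
    \<and> (\<forall>\<epsilon>. \<epsilon> > 2 * \<delta> \<longrightarrow>
         real K + 1 \<ge> 2 * C * (f (x 0) - (INF y\<in>S. f y)) / (\<epsilon> - 2 * \<delta>)\<^sup>2 \<longrightarrow>
         (MIN k\<in>{0..K}. fw_gap S grad (x k)) \<le> \<epsilon>)"
proof -
  \<comment> \<open>\<open>S_ne\<close> follows from \<open>x0\<close>, and \<open>delta_nn\<close> is implied by \<open>inexact_grad\<close>.\<close>
  interpret inexact_frank_wolfe S f grad gd L C \<delta> x s
    by (unfold_locales; fact assms)
  show ?thesis
  proof (intro allI conjI impI)
    fix K :: nat
    show "(MIN k\<in>{0..K}. fw_gap S grad (x k))
        \<le> sqrt (2 * C * (f (x 0) - (INF y\<in>S. f y)) / (real K + 1)) + 2 * \<delta>"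
      by (rule Min_fw_gap_le)
    fix \<epsilon> :: real
    assume gap: "\<epsilon> > 2 * \<delta>"
      and K_large: "real K + 1 \<ge> 2 * C * (f (x 0) - (INF y\<in>S. f y)) / (\<epsilon> - 2 * \<delta>)\<^sup>2"
    have "sqrt (2 * C * (f (x 0) - (INF y\<in>S. f y)) / (real K + 1)) \<le> \<epsilon> - 2 * \<delta>"
      by (rule sqrt_divide_le_if_divide_square_le[OF _ _ K_large]) (use gap in simp_all)
    then show "(MIN k\<in>{0..K}. fw_gap S grad (x k)) \<le> \<epsilon>"
      using Min_fw_gap_le[of K] by linarith
  qed
qed

end
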